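(* Assume (i) for every $x\in\mathcal{X}^s$ the ODE $\mathrm{d}Z_\tau=v_0(x,Z_\tau,\tau)\mathrm{d}\tau$, $Z_0\sim N(0,I_{d_y})$, has a unique solution and $Z_1$ is distributed as $Y^s\mid X^s=x$; (ii) $\mathbb{E}\|Y^s\|_2^4<\infty$; (iii) $r_0(X^s)$ is sub-exponentially distributed. Let $\hat v^s_N$ be any (data-dependent) velocity estimator taking values in $[\underline\delta,\bar\delta]^{d_y}$, built from data independent of $X^s,X^t$, for which the ODE $\mathrm{d}\hat Z_\tau=\hat v^s_N(x,\hat Z_\tau,\tau)\mathrm{d}\tau$, $\hat Z_0\sim N(0,I_{d_y})$ is well posed for each $x$ (e.g. $\hat v^s_N$ Lipschitz in its second argument). Then for $N\ge2$, $$\mathcal{E}^t\le c_1\mathcal{E}^s\log N+\frac{c_2d_y[\max(\bar\delta^2,\underline\delta^2)+1]}{N},$$ where $c_1,c_2$ are constants not depending on $N$.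
   Context: $(X^s,Y^s)$ is a source pair with $X^s\in\mathbb{R}^{d_x}$ having density $p$ and $Y^s\in\mathbb{R}^{d_y}$; $X^t\in\mathbb{R}^{d_x}$ has density $q$, $\{q>0\}\subset\mathcal{X}^s=\{p>0\}$, $r_0=q/p$ ($0/0=0$). Under covariate shift, $Y^t|X^t=x$ has the law of $Y^s|X^s=x$. Let $\eta\sim N(0,I_{d_y})$ independent of $(X^s,Y^s)$, and $a_\tau,b_\tau$ continuously differentiable on $[0,1]$ with $a_0=b_1=1$, $a_1=b_0=0$; $Y^s_\tau=a_\tau\eta+b_\tau Y^s$ and $v_0(x,y,\tau)=\mathbb{E}(\dot a_\tau\eta+\dot b_\tau Y^s\mid Y^s_\tau=y,X^s=x)$. Let $\rho_{0,x}$ be the conditional density of $Y^s|X^s=x$ and $\hat\rho^s_x$ the density of $\hat Z_1$ given $x$. With $W_2^2$ the squared 2-Wasserstein distance, $\mathcal{E}^s=\mathbb{E}[W_2^2(\rho_{0,X^s}\|\hat\rho^s_{X^s})]$ and $\mathcal{E}^t=\mathbb{E}[W_2^2(\rho_{0,X^t}\|\hat\rho^s_{X^t})]$, expectations over the test covariate and the training randomness. A real random variable is sub-exponentially distributed if $\mathbb{E}\exp(\varsigma|V|)<\infty$ for some $\varsigma>0$. *)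

theory Defs
  imports "HOL-Probability.Probability"
begin

definition std_gauss :: "'y::euclidean_space measure" where
  "std_gauss = density lborel
     (\<lambda>y. ennreal ((2 * pi) powr (- real DIM('y) / 2) * exp (- (norm y)\<^sup>2 / 2)))"

definition ode_sol :: "('y::euclidean_space \<Rightarrow> real \<Rightarrow> 'y) \<Rightarrow> 'y \<Rightarrow> (real \<Rightarrow> 'y) \<Rightarrow> bool" where
  "ode_sol v z0 z \<longleftrightarrow> z 0 = z0 \<and>
     (\<forall>t\<in>{0..1}. (z has_vector_derivative v (z t) t) (at t within {0..1}))"

definition flow_end :: "('y::euclidean_space \<Rightarrow> real \<Rightarrow> 'y) \<Rightarrow> 'y \<Rightarrow> 'y" where
  "flow_end v z0 = (SOME z. ode_sol v z0 z) 1"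

definition well_posed :: "('y::euclidean_space \<Rightarrow> real \<Rightarrow> 'y) \<Rightarrow> bool" where
  "well_posed v \<longleftrightarrow>
     (\<forall>z0. \<exists>z. ode_sol v z0 z \<and> (\<forall>w. ode_sol v z0 w \<longrightarrow> (\<forall>t\<in>{0..1}. w t = z t))) \<and>
     flow_end v \<in> borel_measurable borel"

definition flow_law :: "('y::euclidean_space \<Rightarrow> real \<Rightarrow> 'y) \<Rightarrow> 'y measure" where
  "flow_law v = distr std_gauss lborel (flow_end v)"

definition couplings :: "'y::euclidean_space measure \<Rightarrow> 'y measure \<Rightarrow> ('y \<times> 'y) measure set" where
  "couplings \<mu> \<nu> = {\<pi>. sets \<pi> = sets (borel \<Otimes>\<^sub>M borel) \<and> prob_space \<pi> \<and>
      distr \<pi> borel fst = \<mu> \<and> distr \<pi> borel snd = \<nu>}"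

definition W2sq :: "'y::euclidean_space measure \<Rightarrow> 'y measure \<Rightarrow> ennreal" where
  "W2sq \<mu> \<nu> = (INF \<pi>\<in>couplings \<mu> \<nu>. \<integral>\<^sup>+ yz. ennreal ((dist (fst yz) (snd yz))\<^sup>2) \<partial>\<pi>)"

text \<open>Expected squared W2 error E[W_2^2(rho_{0,X} || hat rho_X)] where X has density d,
  expectation over the covariate and over the training randomness (measure T), the two
  being independent.\<close>
definition W2_risk :: "('x::euclidean_space \<Rightarrow> real) \<Rightarrow> ('x \<Rightarrow> 'y::euclidean_space \<Rightarrow> real)
    \<Rightarrow> 'w measure \<Rightarrow> ('w \<Rightarrow> 'x \<Rightarrow> 'y \<Rightarrow> real \<Rightarrow> 'y) \<Rightarrow> ennreal" where
  "W2_risk d rho0 T vh = (\<integral>\<^sup>+ \<omega>. \<integral>\<^sup>+ x. ennreal (d x) *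
       W2sq (density lborel (\<lambda>y. ennreal (rho0 x y))) (flow_law (vh \<omega> x)) \<partial>lborel \<partial>T)"

end

theory Submission
  imports Defs
begin

text \<open>Split the target covariates at the threshold \<open>t = (4/s) log N\<close> of the density ratio
  \<open>r = q/p\<close>. Where \<open>r \<le> t\<close> the weight \<open>q\<close> is at most \<open>t p\<close>, so the source error transfers
  with the factor \<open>t\<close>. Where \<open>r > t\<close>, the W2 error is bounded crudely through the synchronous
  coupling of the two flows started from the same Gaussian point, by the second moments of
  \<open>Y\<^sup>s | X\<^sup>s = x\<close> and of the Gaussian and by \<open>d\<^sub>y max(\<delta>\<^sup>2)\<close> for the bounded displacement of
  the estimated flow. On this tail \<open>r\<^sup>2 \<le> (4/s)\<^sup>2 exp(s r) / N\<^sup>2\<close>, so by AM-GM its contribution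
  is \<open>O(1/N)\<close> times \<open>E exp(s r(X\<^sup>s))\<close> and \<open>E |Y\<^sup>s|\<^sup>4\<close>.\<close>

section \<open>Integrals of non-measurable functions\<close>

lemma nn_integral_measurable_minorant:
  fixes G :: "'a \<Rightarrow> ennreal"
  obtains g where "g \<in> borel_measurable M" "\<And>x. g x \<le> G x" "integral\<^sup>N M g = integral\<^sup>N M G"
proof -
  have ne: "{g. simple_function M g \<and> g \<le> G} \<noteq> {}"
  proof -
    have "(\<lambda>_. 0) \<in> {g. simple_function M g \<and> g \<le> G}" by (auto simp: le_fun_def)
    then show ?thesis by blast
  qed
  obtain f :: "nat \<Rightarrow> ennreal"
    where f: "range f \<subseteq> integral\<^sup>S M ` {g. simple_function M g \<and> g \<le> G}"
      and sup: "integral\<^sup>N M G = Sup (f ` UNIV)"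
    using ennreal_SUP_countable_SUP[OF ne, of "integral\<^sup>S M"] unfolding nn_integral_def by blast
  have "\<forall>i. \<exists>s. simple_function M s \<and> s \<le> G \<and> f i = integral\<^sup>S M s"
    using f by blast
  then obtain s where s: "\<And>i. simple_function M (s i)" "\<And>i. s i \<le> G" "\<And>i. f i = integral\<^sup>S M (s i)"
    by metis
  define g where "g x = (SUP i. s i x)" for x
  have "g \<in> borel_measurable M"
    using borel_measurable_simple_function[OF s(1)] unfolding g_def by measurable
  moreover have le: "g x \<le> G x" for x
    using s(2) unfolding g_def by (auto intro!: SUP_least simp: le_fun_def)
  moreover have "integral\<^sup>N M G \<le> integral\<^sup>N M g"
    unfolding sup
  proof (rule SUP_least)
    fix i
    have "f i = integral\<^sup>N M (s i)" using s by (simp add: nn_integral_eq_simple_integral)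
    also have "\<dots> \<le> integral\<^sup>N M g"
      by (intro nn_integral_mono) (auto simp: g_def intro: SUP_upper)
    finally show "f i \<le> integral\<^sup>N M g" .
  qed
  moreover have "integral\<^sup>N M g \<le> integral\<^sup>N M G"
    using le by (intro nn_integral_mono)
  ultimately show ?thesis by (intro that) (auto intro: antisym)
qed

lemma nn_integral_add_le:
  fixes f g :: "'a \<Rightarrow> ennreal"
  assumes g: "g \<in> borel_measurable M"
  shows "(\<integral>\<^sup>+x. f x + g x \<partial>M) \<le> integral\<^sup>N M f + integral\<^sup>N M g"
  unfolding nn_integral_def[of M "\<lambda>x. f x + g x"]
proof (rule SUP_least, clarify)
  fix s assume s: "simple_function M s" "s \<le> (\<lambda>x. f x + g x)"
  define h where "h x = (if g x = top then 0 else s x - g x)" for x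
  have hm: "h \<in> borel_measurable M"
    unfolding h_def using borel_measurable_simple_function[OF s(1)] g by measurable
  have "integral\<^sup>S M s = integral\<^sup>N M s" using s by (simp add: nn_integral_eq_simple_integral)
  also have "\<dots> \<le> (\<integral>\<^sup>+x. h x + g x \<partial>M)"
    by (intro nn_integral_mono) (auto simp: h_def diff_add_self_ennreal nle_le)
  also have "\<dots> = integral\<^sup>N M h + integral\<^sup>N M g"
    using hm g by (intro nn_integral_add) auto
  also have "integral\<^sup>N M h \<le> integral\<^sup>N M f"
  proof (intro nn_integral_mono)
    fix x have "s x \<le> f x + g x" using s(2) by (auto simp: le_fun_def)
    then show "h x \<le> f x"
      unfolding h_def by (auto simp: ennreal_minus_le_iff add.commute)
  qed
  finally show "integral\<^sup>S M s \<le> integral\<^sup>N M f + integral\<^sup>N M g"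
    by (simp add: add_right_mono)
qed

lemma nn_integral_cmult_le:
  fixes f :: "'a \<Rightarrow> ennreal"
  assumes c: "c < top"
  shows "(\<integral>\<^sup>+x. c * f x \<partial>M) \<le> c * integral\<^sup>N M f"
proof (cases "c = 0")
  case False
  show ?thesis
    unfolding nn_integral_def[of M "\<lambda>x. c * f x"]
  proof (rule SUP_least, clarify)
    fix s assume s: "simple_function M s" "s \<le> (\<lambda>x. c * f x)"
    have eq: "s x = c * (s x / c)" for x
      using False c by (metis ennreal_times_divide mult.commute mult_divide_eq_ennreal top.extremum_strict)
    have "integral\<^sup>S M s = integral\<^sup>N M s" using s by (simp add: nn_integral_eq_simple_integral)
    also have "\<dots> = (\<integral>\<^sup>+x. c * (s x / c) \<partial>M)" using eq by (intro nn_integral_cong) metis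
    also have "\<dots> = c * (\<integral>\<^sup>+x. s x / c \<partial>M)"
      using borel_measurable_simple_function[OF s(1)] by (intro nn_integral_cmult) auto
    also have "\<dots> \<le> c * integral\<^sup>N M f"
    proof (intro mult_left_mono nn_integral_mono)
      fix x have "s x \<le> c * f x" using s(2) by (auto simp: le_fun_def)
      then show "s x / c \<le> f x"
        using False c by (metis divide_le_posI_ennreal not_gr_zero)
    qed simp
    finally show "integral\<^sup>S M s \<le> c * integral\<^sup>N M f" .
  qed
qed simp

lemma nn_integral_nn_integral_affine_le:
  fixes f g :: "'a \<Rightarrow> 'b \<Rightarrow> ennreal"
  assumes "prob_space T" and c: "c < top" and h: "h \<in> borel_measurable N"
    and fgh: "\<And>\<omega> x. f \<omega> x \<le> c * g \<omega> x + h x"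
  shows "(\<integral>\<^sup>+\<omega>. (\<integral>\<^sup>+x. f \<omega> x \<partial>N) \<partial>T)
    \<le> c * (\<integral>\<^sup>+\<omega>. (\<integral>\<^sup>+x. g \<omega> x \<partial>N) \<partial>T) + integral\<^sup>N N h"
proof -
  interpret T: prob_space T by fact
  have inner: "(\<integral>\<^sup>+x. f \<omega> x \<partial>N) \<le> c * (\<integral>\<^sup>+x. g \<omega> x \<partial>N) + integral\<^sup>N N h" for \<omega>
  proof -
    have "(\<integral>\<^sup>+x. f \<omega> x \<partial>N) \<le> (\<integral>\<^sup>+x. c * g \<omega> x + h x \<partial>N)"
      by (intro nn_integral_mono fgh)
    also have "\<dots> \<le> (\<integral>\<^sup>+x. c * g \<omega> x \<partial>N) + integral\<^sup>N N h"
      using h by (rule nn_integral_add_le)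
    also have "(\<integral>\<^sup>+x. c * g \<omega> x \<partial>N) \<le> c * (\<integral>\<^sup>+x. g \<omega> x \<partial>N)"
      using c by (rule nn_integral_cmult_le)
    finally show ?thesis by (simp add: add_right_mono)
  qed
  have "(\<integral>\<^sup>+\<omega>. (\<integral>\<^sup>+x. f \<omega> x \<partial>N) \<partial>T)
      \<le> (\<integral>\<^sup>+\<omega>. c * (\<integral>\<^sup>+x. g \<omega> x \<partial>N) + integral\<^sup>N N h \<partial>T)"
    by (intro nn_integral_mono inner)
  also have "\<dots> \<le> (\<integral>\<^sup>+\<omega>. c * (\<integral>\<^sup>+x. g \<omega> x \<partial>N) \<partial>T) + (\<integral>\<^sup>+\<omega>. integral\<^sup>N N h \<partial>T)"
    by (rule nn_integral_add_le) simp
  also have "(\<integral>\<^sup>+\<omega>. integral\<^sup>N N h \<partial>T) = integral\<^sup>N N h"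
    by (simp add: T.emeasure_space_1)
  also have "(\<integral>\<^sup>+\<omega>. c * (\<integral>\<^sup>+x. g \<omega> x \<partial>N) \<partial>T) \<le> c * (\<integral>\<^sup>+\<omega>. (\<integral>\<^sup>+x. g \<omega> x \<partial>N) \<partial>T)"
    using c by (rule nn_integral_cmult_le)
  finally show ?thesis by (simp add: add_right_mono)
qed

text \<open>The integral formula defines \<open>density M f\<close> as soon as it is a measure at all, which a
  nonzero total mass certifies; \<open>f\<close> need not be measurable.\<close>
lemma emeasure_density_nonmeasurable:
  assumes "emeasure (density M f) (space M) \<noteq> 0" and A: "A \<in> sets M"
  shows "emeasure (density M f) A = (\<integral>\<^sup>+ x. f x * indicator A x \<partial>M)"
proof -
  have sig: "sigma_sets (space M) (sets M) = sets M" by (rule sets.sigma_sets_eq)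
  have "measure_space (space M) (sets M) (\<lambda>A. \<integral>\<^sup>+ x. f x * indicator A x \<partial>M)"
  proof (rule ccontr)
    assume "\<not> ?thesis"
    then have "emeasure (density M f) (space M) = 0"
      unfolding density_def emeasure_measure_of_conv sig by simp
    with assms(1) show False by simp
  qed
  then show ?thesis
    unfolding density_def emeasure_measure_of_conv sig using A by simp
qed

section \<open>Flows with bounded velocity\<close>

lemma ode_sol_flow_end:
  assumes "well_posed v"
  obtains z where "ode_sol v z0 z" "flow_end v z0 = z 1"
proof -
  from assms obtain z where "ode_sol v z0 z" unfolding well_posed_def by blast
  then have "ode_sol v z0 (SOME z. ode_sol v z0 z)" by (rule someI[of "ode_sol v z0"])
  then show ?thesis by (intro that) (simp_all add: flow_end_def)
qed

lemma flow_end_increment_bounds: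
  fixes v :: "'y::euclidean_space \<Rightarrow> real \<Rightarrow> 'y"
  assumes "well_posed v" and bounds: "\<And>y t. \<forall>i\<in>Basis. dl \<le> v y t \<bullet> i \<and> v y t \<bullet> i \<le> du"
    and i: "i \<in> Basis"
  shows "dl \<le> (flow_end v z0 - z0) \<bullet> i \<and> (flow_end v z0 - z0) \<bullet> i \<le> du"
proof -
  obtain w where w: "ode_sol v z0 w" and fe: "flow_end v z0 = w 1"
    using assms(1) by (rule ode_sol_flow_end)
  have "\<exists>t\<in>{0..1}. w 1 \<bullet> i - w 0 \<bullet> i = (1 - 0) *\<^sub>R v (w t) t \<bullet> i"
  proof (rule mvt_very_simple[where f="\<lambda>t. w t \<bullet> i"])
    fix t :: real assume "0 \<le> t" "t \<le> 1"
    then have "(w has_derivative (\<lambda>h. h *\<^sub>R v (w t) t)) (at t within {0..1})"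
      using w unfolding ode_sol_def has_vector_derivative_def by auto
    then show "((\<lambda>t. w t \<bullet> i) has_derivative (\<lambda>h. h *\<^sub>R v (w t) t \<bullet> i)) (at t within {0..1})"
      by (rule has_derivative_inner_left)
  qed simp
  then obtain t where "(flow_end v z0 - z0) \<bullet> i = v (w t) t \<bullet> i"
    using w fe by (auto simp: ode_sol_def inner_diff_left)
  then show ?thesis using bounds i by auto
qed

lemma norm_flow_end_diff_le:
  fixes v :: "'y::euclidean_space \<Rightarrow> real \<Rightarrow> 'y"
  assumes "well_posed v" and bounds: "\<And>y t. \<forall>i\<in>Basis. dl \<le> v y t \<bullet> i \<and> v y t \<bullet> i \<le> du"
  shows "(norm (flow_end v z0 - z0))\<^sup>2 \<le> real DIM('y) * max (du\<^sup>2) (dl\<^sup>2)"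
proof -
  let ?d = "flow_end v z0 - z0"
  have "(norm ?d)\<^sup>2 = (\<Sum>i\<in>Basis. (?d \<bullet> i)\<^sup>2)"
    unfolding power2_norm_eq_inner by (subst euclidean_inner) (simp add: power2_eq_square)
  also have "\<dots> \<le> (\<Sum>i\<in>(Basis::'y set). max (du\<^sup>2) (dl\<^sup>2))"
  proof (rule sum_mono)
    fix i :: 'y assume "i \<in> Basis"
    then have "dl \<le> ?d \<bullet> i" "?d \<bullet> i \<le> du"
      using flow_end_increment_bounds[OF assms] by auto
    then show "(?d \<bullet> i)\<^sup>2 \<le> max (du\<^sup>2) (dl\<^sup>2)"
    proof (cases "0 \<le> ?d \<bullet> i")
      case True
      then have "(?d \<bullet> i)\<^sup>2 \<le> du\<^sup>2" using \<open>?d \<bullet> i \<le> du\<close> by (intro power_mono) auto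
      then show ?thesis by linarith
    next
      case False
      then have "(- (?d \<bullet> i))\<^sup>2 \<le> (- dl)\<^sup>2" using \<open>dl \<le> ?d \<bullet> i\<close> by (intro power_mono) auto
      then show ?thesis by simp
    qed
  qed
  finally show ?thesis by simp
qed

lemma prob_space_flow_law:
  assumes "prob_space (std_gauss :: 'y::euclidean_space measure)" and "well_posed (v :: 'y \<Rightarrow> real \<Rightarrow> 'y)"
  shows "prob_space (flow_law v)"
proof -
  have "flow_end v \<in> std_gauss \<rightarrow>\<^sub>M lborel"
    using assms(2) unfolding well_posed_def by (simp add: std_gauss_def)
  then show ?thesis
    unfolding flow_law_def by (rule prob_space.prob_space_distr[OF assms(1)])
qed

lemma W2sq_flow_law_le:
  fixes v w :: "'y::euclidean_space \<Rightarrow> real \<Rightarrow> 'y"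
  assumes "prob_space (std_gauss :: 'y measure)" and "well_posed v" "well_posed w"
  shows "W2sq (flow_law v) (flow_law w)
    \<le> (\<integral>\<^sup>+ z. ennreal ((dist (flow_end v z) (flow_end w z))\<^sup>2) \<partial>std_gauss)"
proof -
  have sets: "sets (std_gauss :: 'y measure) = sets borel" by (simp add: std_gauss_def)
  have meas: "flow_end v \<in> borel_measurable std_gauss" "flow_end w \<in> borel_measurable std_gauss"
    using assms(2,3) unfolding well_posed_def measurable_cong_sets[OF sets refl] by blast+
  define Z where "Z z = (flow_end v z, flow_end w z)" for z
  have Zm: "Z \<in> std_gauss \<rightarrow>\<^sub>M borel \<Otimes>\<^sub>M borel" unfolding Z_def using meas by measurable
  have law: "flow_law u = distr std_gauss borel (flow_end u)" for u :: "'y \<Rightarrow> real \<Rightarrow> 'y"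
    unfolding flow_law_def by (rule distr_cong) auto
  have "distr std_gauss (borel \<Otimes>\<^sub>M borel) Z \<in> couplings (flow_law v) (flow_law w)"
    unfolding couplings_def
  proof (intro CollectI conjI)
    show "prob_space (distr std_gauss (borel \<Otimes>\<^sub>M borel) Z)"
      by (rule prob_space.prob_space_distr[OF assms(1) Zm])
    show "distr (distr std_gauss (borel \<Otimes>\<^sub>M borel) Z) borel fst = flow_law v"
      unfolding law using Zm by (subst distr_distr) (auto simp: Z_def comp_def)
    show "distr (distr std_gauss (borel \<Otimes>\<^sub>M borel) Z) borel snd = flow_law w"
      unfolding law using Zm by (subst distr_distr) (auto simp: Z_def comp_def)
  qed simp
  then have "W2sq (flow_law v) (flow_law w)
      \<le> (\<integral>\<^sup>+ yz. ennreal ((dist (fst yz) (snd yz))\<^sup>2) \<partial>distr std_gauss (borel \<Otimes>\<^sub>M borel) Z)"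
    unfolding W2sq_def by (rule INF_lower)
  also have "\<dots> = (\<integral>\<^sup>+ z. ennreal ((dist (flow_end v z) (flow_end w z))\<^sup>2) \<partial>std_gauss)"
    using Zm by (subst nn_integral_distr) (auto simp: Z_def)
  finally show ?thesis .
qed

lemma sum_squared_le: "((x::real) + y)\<^sup>2 \<le> 2 * x\<^sup>2 + 2 * y\<^sup>2"
  using zero_le_power2[of "x - y"] unfolding power2_sum power2_diff by linarith

lemma dist_squared_le_norms:
  fixes a b z :: "'a::real_normed_vector"
  shows "(dist a b)\<^sup>2 \<le> 2 * (norm a)\<^sup>2 + 4 * (norm z)\<^sup>2 + 4 * (norm (b - z))\<^sup>2"
proof -
  have "norm b \<le> norm z + norm (b - z)"
    using norm_triangle_ineq[of z "b - z"] by simp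
  then have "dist a b \<le> norm a + (norm z + norm (b - z))"
    using norm_triangle_ineq4[of a b] by (simp add: dist_norm)
  then have "(dist a b)\<^sup>2 \<le> (norm a + (norm z + norm (b - z)))\<^sup>2"
    by (intro power_mono) auto
  also have "\<dots> \<le> 2 * (norm a)\<^sup>2 + 2 * (norm z + norm (b - z))\<^sup>2"
    by (rule sum_squared_le)
  also have "\<dots> \<le> 2 * (norm a)\<^sup>2 + 4 * (norm z)\<^sup>2 + 4 * (norm (b - z))\<^sup>2"
    using sum_squared_le[of "norm z" "norm (b - z)"] by linarith
  finally show ?thesis .
qed

lemma W2sq_flow_law_le_moments:
  fixes v w :: "'y::euclidean_space \<Rightarrow> real \<Rightarrow> 'y"
  assumes gauss: "prob_space (std_gauss :: 'y measure)" and wp: "well_posed v" "well_posed w"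
    and bounds: "\<And>y t. \<forall>i\<in>Basis. dl \<le> w y t \<bullet> i \<and> w y t \<bullet> i \<le> du"
  shows "W2sq (flow_law v) (flow_law w) \<le> 2 * (\<integral>\<^sup>+ y. ennreal ((norm y)\<^sup>2) \<partial>flow_law v)
      + 4 * (\<integral>\<^sup>+ z. ennreal ((norm z)\<^sup>2) \<partial>(std_gauss :: 'y measure))
      + ennreal (4 * (real DIM('y) * max (du\<^sup>2) (dl\<^sup>2)))"
proof -
  interpret G: prob_space "std_gauss :: 'y measure" by (rule gauss)
  define D where "D = real DIM('y) * max (du\<^sup>2) (dl\<^sup>2)"
  have "0 \<le> D" unfolding D_def by (simp add: le_max_iff_disj)
  have sets: "sets (std_gauss :: 'y measure) = sets borel" by (simp add: std_gauss_def)
  have "flow_end v \<in> borel_measurable borel"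
    using wp(1) unfolding well_posed_def by simp
  then have [measurable]: "flow_end v \<in> borel_measurable std_gauss"
    unfolding measurable_cong_sets[OF sets refl] .
  have [measurable]: "(\<lambda>z::'y. z) \<in> borel_measurable std_gauss"
    by (rule measurable_ident_sets[OF sets])
  have "W2sq (flow_law v) (flow_law w)
      \<le> (\<integral>\<^sup>+ z. ennreal ((dist (flow_end v z) (flow_end w z))\<^sup>2) \<partial>std_gauss)"
    using gauss wp by (rule W2sq_flow_law_le)
  also have "\<dots> \<le> (\<integral>\<^sup>+ z. 2 * ennreal ((norm (flow_end v z))\<^sup>2) + 4 * ennreal ((norm z)\<^sup>2)
      + ennreal (4 * D) \<partial>std_gauss)"
  proof (intro nn_integral_mono)
    fix z :: 'y
    have "(norm (flow_end w z - z))\<^sup>2 \<le> D"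
      unfolding D_def using wp(2) bounds by (rule norm_flow_end_diff_le)
    then have "(dist (flow_end v z) (flow_end w z))\<^sup>2
        \<le> 2 * (norm (flow_end v z))\<^sup>2 + 4 * (norm z)\<^sup>2 + 4 * D"
      using dist_squared_le_norms[of "flow_end v z" "flow_end w z" z] by linarith
    moreover have "ennreal (2 * (norm (flow_end v z))\<^sup>2 + 4 * (norm z)\<^sup>2 + 4 * D)
        = 2 * ennreal ((norm (flow_end v z))\<^sup>2) + 4 * ennreal ((norm z)\<^sup>2) + ennreal (4 * D)"
      using \<open>0 \<le> D\<close> by (simp add: ennreal_plus ennreal_mult)
    ultimately show "ennreal ((dist (flow_end v z) (flow_end w z))\<^sup>2)
        \<le> 2 * ennreal ((norm (flow_end v z))\<^sup>2) + 4 * ennreal ((norm z)\<^sup>2) + ennreal (4 * D)"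
      by (metis ennreal_leI)
  qed
  also have "\<dots> = 2 * (\<integral>\<^sup>+ z. ennreal ((norm (flow_end v z))\<^sup>2) \<partial>std_gauss)
      + 4 * (\<integral>\<^sup>+ z. ennreal ((norm z)\<^sup>2) \<partial>(std_gauss :: 'y measure)) + ennreal (4 * D)"
    by (simp add: nn_integral_add nn_integral_cmult G.emeasure_space_1)
  also have "(\<integral>\<^sup>+ z. ennreal ((norm (flow_end v z))\<^sup>2) \<partial>std_gauss)
      = (\<integral>\<^sup>+ y. ennreal ((norm y)\<^sup>2) \<partial>flow_law v)"
    unfolding flow_law_def using \<open>flow_end v \<in> borel_measurable borel\<close>
    by (subst nn_integral_distr) (auto simp: measurable_cong_sets[OF sets refl])
  finally show ?thesis unfolding D_def .
qed

lemma mult_exp_neg_half_le: "0 \<le> (u::real) \<Longrightarrow> exp (- u / 2) * u \<le> 4 * exp (- u / 4)"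
proof -
  have "u / 4 < exp (u / 4)" by (smt (verit) exp_ge_add_one_self)
  then have "exp (- u / 2) * u \<le> exp (- u / 2) * (4 * exp (u / 4))"
    by (intro mult_left_mono) auto
  also have "\<dots> = 4 * exp (- u / 4)" by (simp add: mult.left_commute exp_add[symmetric])
  finally show ?thesis .
qed

lemma nn_integral_exp_quarter_norm:
  fixes c :: real
  assumes "0 \<le> c"
  shows "(\<integral>\<^sup>+ y. ennreal (c * exp (- (norm y)\<^sup>2 / 4)) \<partial>(lborel :: 'y::euclidean_space measure))
    = ennreal (sqrt 2 ^ DIM('y)) * (\<integral>\<^sup>+ x. ennreal (c * exp (- (norm x)\<^sup>2 / 2)) \<partial>(lborel :: 'y measure))"
proof -
  have "(\<integral>\<^sup>+ y. ennreal (c * exp (- (norm y)\<^sup>2 / 4)) \<partial>(lborel :: 'y measure))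
      = (\<integral>\<^sup>+ y. ennreal (c * exp (- (norm y)\<^sup>2 / 4))
          \<partial>density (distr lborel borel (\<lambda>x::'y. 0 + sqrt 2 *\<^sub>R x)) (\<lambda>_. \<bar>sqrt 2\<bar> ^ DIM('y)))"
    by (subst lborel_affine[of "sqrt 2" 0, symmetric]) simp_all
  also have "\<dots> = (\<integral>\<^sup>+ x. ennreal (sqrt 2 ^ DIM('y)) * ennreal (c * exp (- (norm x)\<^sup>2 / 2)) \<partial>(lborel :: 'y measure))"
    by (simp add: nn_integral_density nn_integral_distr power_mult_distrib)
  finally show ?thesis by (simp add: nn_integral_cmult)
qed

lemma std_gauss_second_moment_finite:
  assumes "prob_space (std_gauss :: 'y::euclidean_space measure)"
  shows "(\<integral>\<^sup>+ y. ennreal ((norm y)\<^sup>2) \<partial>(std_gauss :: 'y measure)) < \<infinity>"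
proof -
  define c :: real where "c = (2 * pi) powr (- real DIM('y) / 2)"
  have "c > 0" unfolding c_def by simp
  have gauss: "std_gauss = density lborel (\<lambda>y::'y. ennreal (c * exp (- (norm y)\<^sup>2 / 2)))"
    unfolding std_gauss_def c_def ..
  have one: "(\<integral>\<^sup>+ y. ennreal (c * exp (- (norm y)\<^sup>2 / 2)) \<partial>(lborel :: 'y measure)) = 1"
    using prob_space.emeasure_space_1[OF assms] by (simp add: gauss emeasure_density)
  have "(\<integral>\<^sup>+ y. ennreal ((norm y)\<^sup>2) \<partial>(std_gauss :: 'y measure))
      = (\<integral>\<^sup>+ y. ennreal (c * exp (- (norm y)\<^sup>2 / 2)) * ennreal ((norm y)\<^sup>2) \<partial>(lborel :: 'y measure))"
    unfolding gauss by (subst nn_integral_density) auto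
  also have "\<dots> \<le> (\<integral>\<^sup>+ y. ennreal (4 * c * exp (- (norm y)\<^sup>2 / 4)) \<partial>(lborel :: 'y measure))"
  proof (intro nn_integral_mono)
    fix y :: 'y
    have "c * exp (- (norm y)\<^sup>2 / 2) * (norm y)\<^sup>2 \<le> 4 * c * exp (- (norm y)\<^sup>2 / 4)"
      using mult_left_mono[OF mult_exp_neg_half_le[of "(norm y)\<^sup>2"], of c] \<open>c > 0\<close>
      by (simp add: mult.assoc)
    then show "ennreal (c * exp (- (norm y)\<^sup>2 / 2)) * ennreal ((norm y)\<^sup>2)
        \<le> ennreal (4 * c * exp (- (norm y)\<^sup>2 / 4))"
      using \<open>c > 0\<close> by (simp add: ennreal_mult'[symmetric] ennreal_leI)
  qed
  also have "\<dots> = ennreal (sqrt 2 ^ DIM('y))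
      * (\<integral>\<^sup>+ y. 4 * ennreal (c * exp (- (norm y)\<^sup>2 / 2)) \<partial>(lborel :: 'y measure))"
    using \<open>c > 0\<close> by (subst nn_integral_exp_quarter_norm) (simp_all add: ennreal_mult mult.assoc)
  also have "\<dots> = ennreal (sqrt 2 ^ DIM('y))
      * (4 * (\<integral>\<^sup>+ y. ennreal (c * exp (- (norm y)\<^sup>2 / 2)) \<partial>(lborel :: 'y measure)))"
    by (subst nn_integral_cmult) simp_all
  also have "\<dots> < \<infinity>"
    unfolding one by (simp add: ennreal_mult_less_top)
  finally show ?thesis .
qed

section \<open>Tail estimates\<close>

lemma square_le_exp_of_tail:
  fixes s r N :: real
  assumes s: "0 < s" and N: "1 \<le> N" and r: "4 / s * ln N < r"
  shows "r\<^sup>2 \<le> (4 / s)\<^sup>2 * exp (s * r) / N\<^sup>2"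
proof -
  have "0 \<le> 4 / s * ln N" using s N by simp
  then have "0 < r" using r by linarith
  have "s * r / 4 < exp (s * r / 4)"
    using exp_ge_add_one_self[of "s * r / 4"] by linarith
  then have "r \<le> 4 / s * exp (s * r / 4)" using s by (simp add: field_simps)
  then have "r\<^sup>2 \<le> (4 / s * exp (s * r / 4))\<^sup>2" using \<open>0 < r\<close> by (intro power_mono) auto
  also have "\<dots> = (4 / s)\<^sup>2 * exp (s * r / 2)"
    by (simp add: power_mult_distrib power2_eq_square exp_add[symmetric])
  also have "exp (s * r / 2) \<le> exp (s * r) / N\<^sup>2"
  proof -
    have "N\<^sup>2 = exp (2 * ln N)"
      using N exp_of_nat_mult[of 2 "ln N"] by simp
    also have "\<dots> \<le> exp (s * r / 2)" using r s by (simp add: field_simps)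
    finally have "N\<^sup>2 * exp (s * r / 2) \<le> exp (s * r / 2) * exp (s * r / 2)"
      by (intro mult_right_mono) auto
    also have "\<dots> = exp (s * r)" by (simp add: exp_add[symmetric])
    finally show ?thesis using N by (simp add: pos_le_divide_eq mult.commute)
  qed
  then have "(4 / s)\<^sup>2 * exp (s * r / 2) \<le> (4 / s)\<^sup>2 * (exp (s * r) / N\<^sup>2)"
    by (intro mult_left_mono) auto
  finally show ?thesis by simp
qed

text \<open>On the tail \<open>r > (4/s) log N\<close> of the density ratio, \<open>r\<^sup>2\<close> is at most a \<open>1/N\<^sup>2\<close> fraction
  of \<open>(4/s)\<^sup>2 exp (s r)\<close>; AM-GM with weights \<open>N\<close> and \<open>1/N\<close> then splits off any second factor.\<close>
lemma mult_le_exp_of_tail: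
  fixes s r N u :: real
  assumes s: "0 < s" and N: "1 \<le> N" and r: "4 / s * ln N < r"
  shows "r * u \<le> (4 / s)\<^sup>2 / (2 * N) * exp (s * r) + u\<^sup>2 / (2 * N)"
proof -
  have "0 \<le> (N * r - u)\<^sup>2 / N" using N by simp
  then have "r * u \<le> (N * r\<^sup>2 + u\<^sup>2 / N) / 2"
    using N by (simp add: power2_eq_square field_simps)
  also have "\<dots> \<le> (N * ((4 / s)\<^sup>2 * exp (s * r) / N\<^sup>2) + u\<^sup>2 / N) / 2"
    using mult_left_mono[OF square_le_exp_of_tail[OF assms], of N] N
    by (intro divide_right_mono add_right_mono) auto
  also have "\<dots> = (4 / s)\<^sup>2 / (2 * N) * exp (s * r) + u\<^sup>2 / (2 * N)"
    using N by (simp add: field_simps power2_eq_square)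
  finally show ?thesis .
qed

lemma nn_integral_tail_le:
  fixes R V :: "'a \<Rightarrow> real"
  assumes s: "0 < s" and N: "1 \<le> N"
    and [measurable]: "R \<in> borel_measurable M" "V \<in> borel_measurable M"
  shows "(\<integral>\<^sup>+\<omega>. ennreal (R \<omega> * V \<omega>) * indicator {\<omega>. 4 / s * ln N < R \<omega>} \<omega> \<partial>M)
    \<le> ennreal ((4 / s)\<^sup>2 / (2 * N)) * (\<integral>\<^sup>+\<omega>. ennreal (exp (s * \<bar>R \<omega>\<bar>)) \<partial>M)
      + ennreal (1 / (2 * N)) * (\<integral>\<^sup>+\<omega>. ennreal ((V \<omega>)\<^sup>2) \<partial>M)"
proof -
  define a where "a = (4 / s)\<^sup>2 / (2 * N)"
  define b where "b = 1 / (2 * N)"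
  have "0 \<le> a" "0 \<le> b" using N by (auto simp: a_def b_def)
  have "(\<integral>\<^sup>+\<omega>. ennreal (R \<omega> * V \<omega>) * indicator {\<omega>. 4 / s * ln N < R \<omega>} \<omega> \<partial>M)
      \<le> (\<integral>\<^sup>+\<omega>. ennreal a * ennreal (exp (s * \<bar>R \<omega>\<bar>)) + ennreal b * ennreal ((V \<omega>)\<^sup>2) \<partial>M)"
  proof (intro nn_integral_mono)
    fix \<omega>
    show "ennreal (R \<omega> * V \<omega>) * indicator {\<omega>. 4 / s * ln N < R \<omega>} \<omega>
        \<le> ennreal a * ennreal (exp (s * \<bar>R \<omega>\<bar>)) + ennreal b * ennreal ((V \<omega>)\<^sup>2)"
    proof (cases "4 / s * ln N < R \<omega>")
      case True
      have "0 \<le> 4 / s * ln N" using s N by simp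
      then have "\<bar>R \<omega>\<bar> = R \<omega>" using True by linarith
      then have "R \<omega> * V \<omega> \<le> a * exp (s * \<bar>R \<omega>\<bar>) + b * (V \<omega>)\<^sup>2"
        using mult_le_exp_of_tail[OF s N True, of "V \<omega>"] by (simp add: a_def b_def)
      then have "ennreal (R \<omega> * V \<omega>) \<le> ennreal (a * exp (s * \<bar>R \<omega>\<bar>) + b * (V \<omega>)\<^sup>2)"
        by (rule ennreal_leI)
      also have "\<dots> = ennreal a * ennreal (exp (s * \<bar>R \<omega>\<bar>)) + ennreal b * ennreal ((V \<omega>)\<^sup>2)"
        using \<open>0 \<le> a\<close> \<open>0 \<le> b\<close> by (simp add: ennreal_plus ennreal_mult)
      finally show ?thesis using True by simp
    qed simp
  qed
  also have "\<dots> = ennreal a * (\<integral>\<^sup>+\<omega>. ennreal (exp (s * \<bar>R \<omega>\<bar>)) \<partial>M)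
      + ennreal b * (\<integral>\<^sup>+\<omega>. ennreal ((V \<omega>)\<^sup>2) \<partial>M)"
    by (simp add: nn_integral_add nn_integral_cmult)
  finally show ?thesis unfolding a_def b_def .
qed

section \<open>Conditional laws without measurability\<close>

text \<open>The layers of \<open>|y|\<^sup>2\<close> reduce second moments of the conditional laws, which need not depend
  measurably on \<open>x\<close>, to countably many conditional probabilities.\<close>
definition level :: "nat \<Rightarrow> 'a::real_normed_vector set" where
  "level k = {y. real (Suc k) \<le> (norm y)\<^sup>2}"

lemma level_sets [measurable]: "level k \<in> sets borel"
  unfolding level_def by measurable

lemma suminf_indicator_level: "(\<Sum>k. indicator (level k) y :: ennreal) = of_nat (nat \<lfloor>(norm y)\<^sup>2\<rfloor>)"
proof -
  have "y \<in> level k \<longleftrightarrow> k < nat \<lfloor>(norm y)\<^sup>2\<rfloor>" for k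
  proof -
    have "y \<in> level k \<longleftrightarrow> int (Suc k) \<le> \<lfloor>(norm y)\<^sup>2\<rfloor>"
      unfolding level_def by (simp add: le_floor_iff)
    then show ?thesis by linarith
  qed
  then have "(\<Sum>k. indicator (level k) y :: ennreal) = (\<Sum>k<nat \<lfloor>(norm y)\<^sup>2\<rfloor>. 1)"
    by (subst suminf_finite[of "{..<nat \<lfloor>(norm y)\<^sup>2\<rfloor>}"]) (auto simp: indicator_def)
  then show ?thesis by simp
qed

lemma norm_squared_le_levels: "ennreal ((norm y)\<^sup>2) \<le> 1 + (\<Sum>k. indicator (level k) y)"
proof -
  have "(norm y)\<^sup>2 \<le> 1 + real (nat \<lfloor>(norm y)\<^sup>2\<rfloor>)" by linarith
  then show ?thesis
    unfolding suminf_indicator_level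
    by (simp add: ennreal_of_nat_eq_real_of_nat ennreal_leI flip: ennreal_1 ennreal_plus)
qed

lemma levels_le_norm_squared: "(\<Sum>k. indicator (level k) y) \<le> ennreal ((norm y)\<^sup>2)"
proof -
  have "real (nat \<lfloor>(norm y)\<^sup>2\<rfloor>) = of_int \<lfloor>(norm y)\<^sup>2\<rfloor>" by simp
  then have "real (nat \<lfloor>(norm y)\<^sup>2\<rfloor>) \<le> (norm y)\<^sup>2" by linarith
  then show ?thesis
    unfolding suminf_indicator_level by (simp add: ennreal_of_nat_eq_real_of_nat ennreal_leI)
qed

lemma ennreal_eq_of_add_eq_le:
  fixes a b c d :: ennreal
  assumes "a \<le> c" "b \<le> d" "a + b = c + d" "d < \<top>"
  shows "a = c"
  using assms by (metis add_strict_mono ennreal_add_diff_cancel_right not_le not_less_iff_gr_or_eq)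

lemma ennreal_le_minus_of_add:
  fixes p a b g :: ennreal
  assumes "p = a + b" "g \<le> b" "b < \<top>"
  shows "a \<le> p - g"
  using assms
  by (metis ennreal_add_diff_cancel_right ennreal_mono_minus leD order_trans_rules(24) top.not_eq_extremum)

locale conditional_density = prob_space M
  for M :: "'m measure" and Xs :: "'m \<Rightarrow> 'x::euclidean_space" and Ys :: "'m \<Rightarrow> 'y::euclidean_space"
    and p :: "'x \<Rightarrow> real" and rho0 :: "'x \<Rightarrow> 'y \<Rightarrow> real" +
  assumes Xs_rv [measurable]: "Xs \<in> M \<rightarrow>\<^sub>M borel" and Ys_rv [measurable]: "Ys \<in> M \<rightarrow>\<^sub>M borel"
    and p_nonneg: "\<And>x. 0 \<le> p x" and p_meas [measurable]: "p \<in> borel_measurable borel"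
    and Xs_density: "distr M lborel Xs = density lborel (\<lambda>x. ennreal (p x))"
    and rho0_cond: "\<And>A B. A \<in> sets borel \<Longrightarrow> B \<in> sets borel \<Longrightarrow>
        emeasure M {\<omega> \<in> space M. Xs \<omega> \<in> A \<and> Ys \<omega> \<in> B}
        = (\<integral>\<^sup>+ x\<in>A. ennreal (p x) * (\<integral>\<^sup>+ y\<in>B. ennreal (rho0 x y) \<partial>lborel) \<partial>lborel)"
    and cond_prob: "\<And>x. 0 < p x \<Longrightarrow> prob_space (density lborel (\<lambda>y. ennreal (rho0 x y)))"
begin

abbreviation cond_law :: "'x \<Rightarrow> 'y measure" where
  "cond_law x \<equiv> density lborel (\<lambda>y. ennreal (rho0 x y))"

definition joint :: "'x set \<Rightarrow> 'y set \<Rightarrow> ennreal" where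
  "joint A B = emeasure M {\<omega> \<in> space M. Xs \<omega> \<in> A \<and> Ys \<omega> \<in> B}"

lemma joint_finite: "joint A B < \<top>"
  unfolding joint_def by (simp add: emeasure_finite less_top[symmetric])

lemma joint_Un_left:
  assumes "A1 \<in> sets borel" "A2 \<in> sets borel" "B \<in> sets borel" "A1 \<inter> A2 = {}"
  shows "joint A1 B + joint A2 B = joint (A1 \<union> A2) B"
proof -
  have "{\<omega> \<in> space M. Xs \<omega> \<in> A1 \<union> A2 \<and> Ys \<omega> \<in> B}
      = {\<omega> \<in> space M. Xs \<omega> \<in> A1 \<and> Ys \<omega> \<in> B} \<union> {\<omega> \<in> space M. Xs \<omega> \<in> A2 \<and> Ys \<omega> \<in> B}"
    by auto
  then show ?thesis unfolding joint_def using assms by (auto intro!: plus_emeasure)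
qed

lemma joint_Un_right:
  assumes "A \<in> sets borel" "B1 \<in> sets borel" "B2 \<in> sets borel" "B1 \<inter> B2 = {}"
  shows "joint A B1 + joint A B2 = joint A (B1 \<union> B2)"
proof -
  have "{\<omega> \<in> space M. Xs \<omega> \<in> A \<and> Ys \<omega> \<in> B1 \<union> B2}
      = {\<omega> \<in> space M. Xs \<omega> \<in> A \<and> Ys \<omega> \<in> B1} \<union> {\<omega> \<in> space M. Xs \<omega> \<in> A \<and> Ys \<omega> \<in> B2}"
    by auto
  then show ?thesis unfolding joint_def using assms by (auto intro!: plus_emeasure)
qed

lemma nn_integral_p_eq_expectation:
  assumes [measurable]: "f \<in> borel_measurable borel"
  shows "(\<integral>\<^sup>+ x. ennreal (p x) * f x \<partial>lborel) = (\<integral>\<^sup>+ \<omega>. f (Xs \<omega>) \<partial>M)"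
proof -
  have "(\<integral>\<^sup>+ x. ennreal (p x) * f x \<partial>lborel) = (\<integral>\<^sup>+ x. f x \<partial>distr M lborel Xs)"
    unfolding Xs_density by (simp add: nn_integral_density)
  also have "\<dots> = (\<integral>\<^sup>+ \<omega>. f (Xs \<omega>) \<partial>M)" by (simp add: nn_integral_distr)
  finally show ?thesis .
qed

lemma joint_UNIV_right:
  assumes "A \<in> sets borel"
  shows "joint A UNIV = (\<integral>\<^sup>+ x. ennreal (p x) * indicator A x \<partial>lborel)"
proof -
  have "joint A UNIV = emeasure (distr M lborel Xs) A"
    using assms by (subst emeasure_distr) (auto simp: joint_def intro!: arg_cong[where f="emeasure M"])
  also have "\<dots> = (\<integral>\<^sup>+ x. ennreal (p x) * indicator A x \<partial>lborel)"
    unfolding Xs_density using assms by (simp add: emeasure_density)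
  finally show ?thesis .
qed

lemma emeasure_cond_law:
  assumes "0 < p x" "B \<in> sets borel"
  shows "emeasure (cond_law x) B = (\<integral>\<^sup>+ y. ennreal (rho0 x y) * indicator B y \<partial>lborel)"
proof -
  interpret C: prob_space "cond_law x" using cond_prob[OF assms(1)] .
  show ?thesis
    using C.emeasure_space_1 assms(2) by (intro emeasure_density_nonmeasurable) auto
qed

text \<open>\<open>rho0\<close> need not be measurable, so \<open>x \<mapsto> p x * cond_law x B\<close> is only squeezed between
  measurable functions whose integrals over every Borel set are the joint probabilities.\<close>
lemma measurable_minorant_joint:
  assumes B: "B \<in> sets borel"
  obtains g where "g \<in> borel_measurable borel"
    "\<And>x. 0 < p x \<Longrightarrow> g x \<le> ennreal (p x) * emeasure (cond_law x) B"
    "\<And>x. g x \<le> ennreal (p x)"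
    "\<And>A. A \<in> sets borel \<Longrightarrow> (\<integral>\<^sup>+ x. g x * indicator A x \<partial>lborel) = joint A B"
proof -
  define G where "G x = ennreal (p x) * (\<integral>\<^sup>+ y. ennreal (rho0 x y) * indicator B y \<partial>lborel)" for x
  have G_int: "(\<integral>\<^sup>+ x. G x * indicator A x \<partial>lborel) = joint A B" if "A \<in> sets borel" for A
    using rho0_cond[OF that B] unfolding joint_def G_def by simp
  have G_cond: "G x = ennreal (p x) * emeasure (cond_law x) B" if "0 < p x" for x
    using emeasure_cond_law[OF that B] by (simp add: G_def)
  obtain g where "g \<in> borel_measurable lborel" and gG: "\<And>x. g x \<le> G x"
    and g_int: "integral\<^sup>N lborel g = integral\<^sup>N lborel G"
    by (rule nn_integral_measurable_minorant[of lborel G]) blast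
  then have gm [measurable]: "g \<in> borel_measurable borel" by simp
  have g_le_p: "g x \<le> ennreal (p x)" for x
  proof (cases "0 < p x")
    case True
    interpret C: prob_space "cond_law x" using cond_prob[OF True] .
    have "g x \<le> ennreal (p x) * emeasure (cond_law x) B" using gG[of x] G_cond[OF True] by simp
    also have "\<dots> \<le> ennreal (p x) * 1" by (intro mult_left_mono) (auto simp: C.emeasure_le_1)
    finally show ?thesis by simp
  next
    case False
    then show ?thesis using gG[of x] p_nonneg[of x] by (simp add: G_def)
  qed
  have g_int_joint: "(\<integral>\<^sup>+ x. g x * indicator A x \<partial>lborel) = joint A B" if A: "A \<in> sets borel" for A
  proof -
    have le: "(\<integral>\<^sup>+ x. g x * indicator A' x \<partial>lborel) \<le> joint A' B" if "A' \<in> sets borel" for A'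
      unfolding G_int[OF that, symmetric] using gG by (intro nn_integral_mono mult_right_mono) auto
    have "(\<integral>\<^sup>+ x. g x * indicator A x \<partial>lborel) + (\<integral>\<^sup>+ x. g x * indicator (- A) x \<partial>lborel)
        = (\<integral>\<^sup>+ x. g x * indicator A x + g x * indicator (- A) x \<partial>lborel)"
      using A by (intro nn_integral_add[symmetric]) auto
    also have "\<dots> = integral\<^sup>N lborel g"
      by (intro nn_integral_cong) (simp split: split_indicator)
    also have "\<dots> = joint UNIV B"
      using g_int G_int[of UNIV] by simp
    also have "\<dots> = joint A B + joint (- A) B"
      using joint_Un_left[of A "- A" B] A B by (simp add: Compl_partition)
    finally have "(\<integral>\<^sup>+ x. g x * indicator A x \<partial>lborel) + (\<integral>\<^sup>+ x. g x * indicator (- A) x \<partial>lborel)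
        = joint A B + joint (- A) B" .
    moreover have "(\<integral>\<^sup>+ x. g x * indicator (- A) x \<partial>lborel) \<le> joint (- A) B"
      using A by (intro le) simp
    ultimately show ?thesis
      using le[OF A] joint_finite[of "- A" B] by (metis ennreal_eq_of_add_eq_le)
  qed
  show ?thesis
  proof (rule that[OF gm _ g_le_p g_int_joint])
    show "g x \<le> ennreal (p x) * emeasure (cond_law x) B" if "0 < p x" for x
      using gG[of x] G_cond[OF that] by simp
  qed
qed


lemma measurable_majorant_joint:
  assumes B: "B \<in> sets borel"
  obtains U where "U \<in> borel_measurable borel"
    "\<And>x. 0 < p x \<Longrightarrow> ennreal (p x) * emeasure (cond_law x) B \<le> U x"
    "\<And>A. A \<in> sets borel \<Longrightarrow> (\<integral>\<^sup>+ x. U x * indicator A x \<partial>lborel) = joint A B"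
proof -
  obtain g where gm [measurable]: "g \<in> borel_measurable borel"
    and g_cond: "\<And>x. 0 < p x \<Longrightarrow> g x \<le> ennreal (p x) * emeasure (cond_law x) (- B)"
    and g_le_p: "\<And>x. g x \<le> ennreal (p x)"
    and g_int: "\<And>A. A \<in> sets borel \<Longrightarrow> (\<integral>\<^sup>+ x. g x * indicator A x \<partial>lborel) = joint A (- B)"
    by (rule measurable_minorant_joint[OF borel_comp[OF B]]) blast
  define U where "U x = ennreal (p x) - g x" for x
  have U_ge: "ennreal (p x) * emeasure (cond_law x) B \<le> U x" if "0 < p x" for x
  proof -
    interpret C: prob_space "cond_law x" using cond_prob[OF that] .
    have "emeasure (cond_law x) B + emeasure (cond_law x) (- B) = emeasure (cond_law x) (B \<union> - B)"
      using B by (intro plus_emeasure) auto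
    then have "emeasure (cond_law x) B + emeasure (cond_law x) (- B) = 1"
      using C.emeasure_space_1 by simp
    then have "ennreal (p x)
        = ennreal (p x) * emeasure (cond_law x) B + ennreal (p x) * emeasure (cond_law x) (- B)"
      by (metis distrib_left mult_1_right)
    moreover have "ennreal (p x) * emeasure (cond_law x) (- B) < \<top>"
      using C.emeasure_le_1[of "- B"] by (simp add: ennreal_mult_less_top order_le_less_trans)
    ultimately show ?thesis
      unfolding U_def using g_cond[OF that] by (metis ennreal_le_minus_of_add)
  qed
  have U_int: "(\<integral>\<^sup>+ x. U x * indicator A x \<partial>lborel) = joint A B" if A: "A \<in> sets borel" for A
  proof -
    have "(\<integral>\<^sup>+ x. U x * indicator A x \<partial>lborel)
        = (\<integral>\<^sup>+ x. ennreal (p x) * indicator A x - g x * indicator A x \<partial>lborel)"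
      unfolding U_def by (intro nn_integral_cong) (simp split: split_indicator)
    also have "\<dots> = (\<integral>\<^sup>+ x. ennreal (p x) * indicator A x \<partial>lborel) - (\<integral>\<^sup>+ x. g x * indicator A x \<partial>lborel)"
      using A g_le_p g_int[OF A] joint_finite[of A "- B"]
      by (intro nn_integral_diff) (auto split: split_indicator)
    also have "\<dots> = joint A UNIV - joint A (- B)"
      using A by (simp add: joint_UNIV_right g_int)
    also have "joint A UNIV = joint A B + joint A (- B)"
      using joint_Un_right[of A B "- B"] A B by (simp add: Compl_partition)
    finally show ?thesis
      using joint_finite[of A "- B"] by (simp add: ennreal_add_diff_cancel_right less_top)
  qed
  have "U \<in> borel_measurable borel" unfolding U_def by measurable
  from that[OF this U_ge U_int] show ?thesis .
qed

lemma nn_integral_majorant_eq: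
  assumes [measurable]: "U \<in> borel_measurable borel" "f \<in> borel_measurable borel" "B \<in> sets borel"
    and U: "\<And>A. A \<in> sets borel \<Longrightarrow> (\<integral>\<^sup>+ x. U x * indicator A x \<partial>lborel) = joint A B"
  shows "(\<integral>\<^sup>+ x. U x * f x \<partial>lborel) = (\<integral>\<^sup>+ \<omega>. indicator B (Ys \<omega>) * f (Xs \<omega>) \<partial>M)"
proof -
  define h where "h \<omega> = (indicator B (Ys \<omega>) :: ennreal)" for \<omega>
  have [measurable]: "h \<in> borel_measurable M" unfolding h_def by measurable
  have "density lborel U = distr (density M h) lborel Xs"
  proof (rule measure_eqI)
    fix A assume "A \<in> sets (density lborel U)"
    then have [measurable]: "A \<in> sets borel" by simp
    have "emeasure (density lborel U) A = joint A B"
      using U by (simp add: emeasure_density)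
    also have "\<dots> = (\<integral>\<^sup>+ \<omega>. indicator {\<omega> \<in> space M. Xs \<omega> \<in> A \<and> Ys \<omega> \<in> B} \<omega> \<partial>M)"
      unfolding joint_def by (subst nn_integral_indicator) measurable
    also have "\<dots> = (\<integral>\<^sup>+ \<omega>. h \<omega> * indicator (Xs -` A \<inter> space M) \<omega> \<partial>M)"
      by (intro nn_integral_cong) (simp add: h_def split: split_indicator)
    also have "\<dots> = emeasure (distr (density M h) lborel Xs) A"
      by (simp add: emeasure_distr emeasure_density)
    finally show "emeasure (density lborel U) A = emeasure (distr (density M h) lborel Xs) A" .
  qed simp
  then have "(\<integral>\<^sup>+ x. U x * f x \<partial>lborel) = (\<integral>\<^sup>+ x. f x \<partial>distr (density M h) lborel Xs)"
    by (simp flip: nn_integral_density)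
  also have "\<dots> = (\<integral>\<^sup>+ \<omega>. h \<omega> * f (Xs \<omega>) \<partial>M)"
    by (simp add: nn_integral_distr nn_integral_density)
  finally show ?thesis unfolding h_def .
qed

definition level_majorant :: "nat \<Rightarrow> 'x \<Rightarrow> ennreal" where
  "level_majorant k = (SOME U. U \<in> borel_measurable borel \<and>
     (\<forall>x. 0 < p x \<longrightarrow> ennreal (p x) * emeasure (cond_law x) (level k) \<le> U x) \<and>
     (\<forall>A \<in> sets borel. (\<integral>\<^sup>+ x. U x * indicator A x \<partial>lborel) = joint A (level k)))"

lemma level_majorant:
  shows level_majorant_measurable [measurable]: "level_majorant k \<in> borel_measurable borel"
    and level_majorant_ge: "0 < p x \<Longrightarrow> ennreal (p x) * emeasure (cond_law x) (level k) \<le> level_majorant k x"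
    and nn_integral_level_majorant: "f \<in> borel_measurable borel \<Longrightarrow>
      (\<integral>\<^sup>+ x. level_majorant k x * f x \<partial>lborel) = (\<integral>\<^sup>+ \<omega>. indicator (level k) (Ys \<omega>) * f (Xs \<omega>) \<partial>M)"
proof -
  obtain U where "U \<in> borel_measurable borel"
    "\<And>x. 0 < p x \<Longrightarrow> ennreal (p x) * emeasure (cond_law x) (level k) \<le> U x"
    "\<And>A. A \<in> sets borel \<Longrightarrow> (\<integral>\<^sup>+ x. U x * indicator A x \<partial>lborel) = joint A (level k)"
    by (rule measurable_majorant_joint[OF level_sets]) blast
  then have "\<exists>U. U \<in> borel_measurable borel \<and>
     (\<forall>x. 0 < p x \<longrightarrow> ennreal (p x) * emeasure (cond_law x) (level k) \<le> U x) \<and>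
     (\<forall>A \<in> sets borel. (\<integral>\<^sup>+ x. U x * indicator A x \<partial>lborel) = joint A (level k))"
    by blast
  then have U: "level_majorant k \<in> borel_measurable borel \<and>
     (\<forall>x. 0 < p x \<longrightarrow> ennreal (p x) * emeasure (cond_law x) (level k) \<le> level_majorant k x) \<and>
     (\<forall>A \<in> sets borel. (\<integral>\<^sup>+ x. level_majorant k x * indicator A x \<partial>lborel) = joint A (level k))"
    unfolding level_majorant_def by (rule someI_ex)
  then show "level_majorant k \<in> borel_measurable borel"
    and "0 < p x \<Longrightarrow> ennreal (p x) * emeasure (cond_law x) (level k) \<le> level_majorant k x"
    by blast+
  show "(\<integral>\<^sup>+ x. level_majorant k x * f x \<partial>lborel) = (\<integral>\<^sup>+ \<omega>. indicator (level k) (Ys \<omega>) * f (Xs \<omega>) \<partial>M)"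
    if "f \<in> borel_measurable borel"
    using U that by (intro nn_integral_majorant_eq) auto
qed

lemma second_moment_le_level_majorants:
  assumes "0 < p x"
  shows "ennreal (p x) * (\<integral>\<^sup>+ y. ennreal ((norm y)\<^sup>2) \<partial>cond_law x)
    \<le> ennreal (p x) + (\<Sum>k. level_majorant k x)"
proof -
  interpret C: prob_space "cond_law x" using cond_prob[OF assms] .
  have "emeasure (cond_law x) UNIV = 1" using C.emeasure_space_1 by simp
  have "(\<integral>\<^sup>+ y. ennreal ((norm y)\<^sup>2) \<partial>cond_law x) \<le> (\<integral>\<^sup>+ y. 1 + (\<Sum>k. indicator (level k) y) \<partial>cond_law x)"
    by (intro nn_integral_mono norm_squared_le_levels)
  also have "\<dots> = 1 + (\<Sum>k. emeasure (cond_law x) (level k))"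
    using \<open>emeasure (cond_law x) UNIV = 1\<close> by (simp add: nn_integral_add nn_integral_suminf)
  finally have "ennreal (p x) * (\<integral>\<^sup>+ y. ennreal ((norm y)\<^sup>2) \<partial>cond_law x)
      \<le> ennreal (p x) * (1 + (\<Sum>k. emeasure (cond_law x) (level k)))"
    by (rule mult_left_mono) simp
  also have "\<dots> = ennreal (p x) + (\<Sum>k. ennreal (p x) * emeasure (cond_law x) (level k))"
    by (simp add: distrib_left ennreal_suminf_cmult)
  also have "\<dots> \<le> ennreal (p x) + (\<Sum>k. level_majorant k x)"
    using level_majorant_ge[OF assms] by (intro add_left_mono suminf_le) auto
  finally show ?thesis .
qed

lemma nn_integral_level_majorants_le:
  assumes [measurable]: "f \<in> borel_measurable borel"
  shows "(\<integral>\<^sup>+ x. (\<Sum>k. level_majorant k x) * f x \<partial>lborel)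
    \<le> (\<integral>\<^sup>+ \<omega>. ennreal ((norm (Ys \<omega>))\<^sup>2) * f (Xs \<omega>) \<partial>M)"
proof -
  have "(\<integral>\<^sup>+ x. (\<Sum>k. level_majorant k x) * f x \<partial>lborel) = (\<Sum>k. \<integral>\<^sup>+ x. level_majorant k x * f x \<partial>lborel)"
    by (simp flip: ennreal_suminf_multc add: nn_integral_suminf)
  also have "\<dots> = (\<Sum>k. \<integral>\<^sup>+ \<omega>. indicator (level k) (Ys \<omega>) * f (Xs \<omega>) \<partial>M)"
    by (simp add: nn_integral_level_majorant)
  also have "\<dots> = (\<integral>\<^sup>+ \<omega>. (\<Sum>k. indicator (level k) (Ys \<omega>)) * f (Xs \<omega>) \<partial>M)"
    by (simp flip: ennreal_suminf_multc add: nn_integral_suminf)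
  also have "\<dots> \<le> (\<integral>\<^sup>+ \<omega>. ennreal ((norm (Ys \<omega>))\<^sup>2) * f (Xs \<omega>) \<partial>M)"
    by (intro nn_integral_mono mult_right_mono levels_le_norm_squared) simp
  finally show ?thesis .
qed

end

section \<open>Transfer under covariate shift\<close>

lemma remainder_constant_le:
  fixes A B G d e N :: real
  assumes "0 \<le> A" "0 \<le> B" "0 \<le> G" "1 \<le> d" "0 \<le> e" "0 < N"
  shows "((2 + (4 * G + 4 * (d * e))) * A + 2 * B) / (2 * N)
    \<le> ((6 + 4 * G) * A + 2 * B) / 2 * d * (e + 1) / N"
proof -
  have "1 \<le> d * (e + 1)" using assms(4,5) mult_mono[of 1 d 1 "e + 1"] by simp
  have "d * e \<le> d * (e + 1)" using assms(4) by simp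
  have "(2 + 4 * G) * A + 2 * B \<le> ((2 + 4 * G) * A + 2 * B) * (d * (e + 1))"
    using mult_left_mono[OF \<open>1 \<le> d * (e + 1)\<close>, of "(2 + 4 * G) * A + 2 * B"] assms(1-3) by simp
  moreover have "4 * A * (d * e) \<le> 4 * A * (d * (e + 1))"
    using mult_left_mono[OF \<open>d * e \<le> d * (e + 1)\<close>, of "4 * A"] assms(1) by simp
  ultimately have "(2 + (4 * G + 4 * (d * e))) * A + 2 * B \<le> ((6 + 4 * G) * A + 2 * B) * (d * (e + 1))"
    by (simp add: algebra_simps)
  then have "((2 + (4 * G + 4 * (d * e))) * A + 2 * B) / (2 * N)
      \<le> ((6 + 4 * G) * A + 2 * B) * (d * (e + 1)) / (2 * N)"
    using assms(6) by (intro divide_right_mono) auto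
  also have "\<dots> = ((6 + 4 * G) * A + 2 * B) / 2 * d * (e + 1) / N"
    by (simp add: field_simps)
  finally show ?thesis .
qed

locale covariate_shift = conditional_density M Xs Ys p rho0
  for M :: "'m measure" and Xs :: "'m \<Rightarrow> 'x::euclidean_space" and Ys :: "'m \<Rightarrow> 'y::euclidean_space"
    and p rho0 +
  fixes q :: "'x \<Rightarrow> real" and v0 :: "'x \<Rightarrow> 'y \<Rightarrow> real \<Rightarrow> 'y"
  assumes q_nonneg: "\<And>x. 0 \<le> q x" and q_meas [measurable]: "q \<in> borel_measurable borel"
    and supp: "{x. 0 < q x} \<subseteq> {x. 0 < p x}"
    and gauss: "prob_space (std_gauss :: 'y measure)"
    and cond_flow: "\<And>x. 0 < p x \<Longrightarrow> well_posed (v0 x) \<and> flow_law (v0 x) = cond_law x"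
begin

definition ratio :: "'x \<Rightarrow> real" where
  "ratio x = q x / p x"

lemma ratio_measurable [measurable]: "ratio \<in> borel_measurable borel"
  unfolding ratio_def by measurable

lemma q_eq_ratio_mult: "0 < ratio x \<or> 0 < q x \<Longrightarrow> q x = ratio x * p x"
  using supp by (auto simp: ratio_def)

definition tail_remainder :: "real \<Rightarrow> real \<Rightarrow> 'x \<Rightarrow> ennreal" where
  "tail_remainder t K x = indicator {x. t < ratio x} x *
     (2 * ennreal (ratio x) * (ennreal (p x) + (\<Sum>k. level_majorant k x)) + ennreal (q x) * ennreal K)"

lemma q_mult_le_tail_split:
  fixes W :: ennreal
  assumes "0 \<le> t" "0 \<le> K"
    and W: "0 < p x \<Longrightarrow> W \<le> 2 * (\<integral>\<^sup>+ y. ennreal ((norm y)\<^sup>2) \<partial>cond_law x) + ennreal K"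
  shows "ennreal (q x) * W \<le> ennreal t * (ennreal (p x) * W) + tail_remainder t K x"
proof (cases "0 < q x")
  case False
  then show ?thesis using q_nonneg[of x] by simp
next
  case True
  then have px: "0 < p x" using supp by auto
  have qrp: "q x = ratio x * p x" using True by (rule q_eq_ratio_mult[OF disjI2])
  show ?thesis
  proof (cases "t < ratio x")
    case False
    then have "q x \<le> t * p x" unfolding qrp using px by (intro mult_right_mono) auto
    then have "ennreal (q x) * W \<le> ennreal (t * p x) * W" by (intro mult_right_mono ennreal_leI) auto
    also have "\<dots> = ennreal t * (ennreal (p x) * W)"
      using assms(1) px by (simp add: ennreal_mult mult.assoc)
    finally show ?thesis by (rule add_increasing2[OF zero_le])
  next
    case True
    have "0 \<le> ratio x" using True assms(1) by linarith
    have "ennreal (q x) * W \<le> ennreal (q x) * (2 * (\<integral>\<^sup>+ y. ennreal ((norm y)\<^sup>2) \<partial>cond_law x) + ennreal K)"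
      by (rule mult_left_mono[OF W[OF px]]) simp
    also have "\<dots> = 2 * (ennreal (ratio x) * (ennreal (p x) * (\<integral>\<^sup>+ y. ennreal ((norm y)\<^sup>2) \<partial>cond_law x)))
        + ennreal (q x) * ennreal K"
      unfolding qrp using \<open>0 \<le> ratio x\<close> px by (simp add: ennreal_mult distrib_left mult_ac)
    also have "\<dots> \<le> 2 * (ennreal (ratio x) * (ennreal (p x) + (\<Sum>k. level_majorant k x)))
        + ennreal (q x) * ennreal K"
      by (intro add_right_mono mult_left_mono second_moment_le_level_majorants[OF px]) auto
    also have "\<dots> = tail_remainder t K x"
      using True by (simp add: tail_remainder_def mult.assoc)
    finally show ?thesis by (rule add_increasing[OF zero_le])
  qed
qed

definition gauss_moment :: real where
  "gauss_moment = enn2real (\<integral>\<^sup>+ z. ennreal ((norm z)\<^sup>2) \<partial>(std_gauss :: 'y measure))"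

lemma gauss_moment: "(\<integral>\<^sup>+ z. ennreal ((norm z)\<^sup>2) \<partial>(std_gauss :: 'y measure)) = ennreal gauss_moment"
  using std_gauss_second_moment_finite[OF gauss]
  unfolding gauss_moment_def by (simp add: ennreal_enn2real less_top[symmetric])

lemma W2sq_cond_law_le:
  assumes "0 < p x" and "well_posed w" and bounds: "\<And>y t. \<forall>i\<in>Basis. dl \<le> w y t \<bullet> i \<and> w y t \<bullet> i \<le> du"
  shows "W2sq (cond_law x) (flow_law w) \<le> 2 * (\<integral>\<^sup>+ y. ennreal ((norm y)\<^sup>2) \<partial>cond_law x)
    + ennreal (4 * gauss_moment + 4 * (real DIM('y) * max (du\<^sup>2) (dl\<^sup>2)))"
proof -
  have "0 \<le> gauss_moment" by (simp add: gauss_moment_def)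
  have v0: "well_posed (v0 x)" "flow_law (v0 x) = cond_law x" using cond_flow[OF assms(1)] by auto
  have "W2sq (cond_law x) (flow_law w) \<le> 2 * (\<integral>\<^sup>+ y. ennreal ((norm y)\<^sup>2) \<partial>cond_law x)
      + 4 * ennreal gauss_moment + ennreal (4 * (real DIM('y) * max (du\<^sup>2) (dl\<^sup>2)))"
    using W2sq_flow_law_le_moments[OF gauss v0(1) assms(2) bounds] unfolding v0(2) gauss_moment .
  also have "\<dots> = 2 * (\<integral>\<^sup>+ y. ennreal ((norm y)\<^sup>2) \<partial>cond_law x)
      + ennreal (4 * gauss_moment + 4 * (real DIM('y) * max (du\<^sup>2) (dl\<^sup>2)))"
    using \<open>0 \<le> gauss_moment\<close> by (simp add: ennreal_plus ennreal_mult add.assoc le_max_iff_disj)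
  finally show ?thesis .
qed

lemma nn_integral_tail_ratio_le:
  assumes s: "0 < s" and N: "1 \<le> N" and [measurable]: "V \<in> borel_measurable M" and V: "\<And>\<omega>. 0 \<le> V \<omega>"
  shows "(\<integral>\<^sup>+\<omega>. ennreal (V \<omega>) * (ennreal (ratio (Xs \<omega>)) * indicator {x. 4 / s * ln N < ratio x} (Xs \<omega>)) \<partial>M)
    \<le> ennreal ((4 / s)\<^sup>2 / (2 * N)) * (\<integral>\<^sup>+\<omega>. ennreal (exp (s * \<bar>ratio (Xs \<omega>)\<bar>)) \<partial>M)
      + ennreal (1 / (2 * N)) * (\<integral>\<^sup>+\<omega>. ennreal ((V \<omega>)\<^sup>2) \<partial>M)"
proof -
  have "0 \<le> 4 / s * ln N" using s N by simp
  have "ennreal (V \<omega>) * (ennreal (ratio (Xs \<omega>)) * indicator {x. 4 / s * ln N < ratio x} (Xs \<omega>))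
      = ennreal (ratio (Xs \<omega>) * V \<omega>) * indicator {\<omega>. 4 / s * ln N < ratio (Xs \<omega>)} \<omega>" for \<omega>
    using \<open>0 \<le> 4 / s * ln N\<close> V[of \<omega>]
    by (auto simp: ennreal_mult mult.commute split: split_indicator)
  then show ?thesis
    using nn_integral_tail_le[OF s N, of "\<lambda>\<omega>. ratio (Xs \<omega>)" M V] by simp
qed

lemma nn_integral_tail_remainder_le:
  assumes s: "0 < s" and N: "1 \<le> N" and K: "0 \<le> K"
    and \<alpha>: "(\<integral>\<^sup>+\<omega>. ennreal (exp (s * \<bar>ratio (Xs \<omega>)\<bar>)) \<partial>M) = ennreal \<alpha>"
    and \<beta>: "(\<integral>\<^sup>+\<omega>. ennreal (norm (Ys \<omega>) ^ 4) \<partial>M) = ennreal \<beta>"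
    and "0 \<le> \<alpha>" "0 \<le> \<beta>"
  shows "integral\<^sup>N lborel (tail_remainder (4 / s * ln N) K)
    \<le> ennreal (((2 + K) * ((4 / s)\<^sup>2 * \<alpha> + 1) + 2 * ((4 / s)\<^sup>2 * \<alpha> + \<beta>)) / (2 * N))"
proof -
  define a where "a = (4 / s)\<^sup>2 / (2 * N)"
  define b where "b = 1 / (2 * N)"
  have "0 \<le> a" "0 \<le> b" using N by (auto simp: a_def b_def)
  define f where "f x = ennreal (ratio x) * indicator {x. 4 / s * ln N < ratio x} x" for x
  have [measurable]: "f \<in> borel_measurable borel" unfolding f_def by measurable
  have rem: "tail_remainder (4 / s * ln N) K x
      = ennreal (2 + K) * (ennreal (p x) * f x) + 2 * ((\<Sum>k. level_majorant k x) * f x)" for x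
  proof (cases "4 / s * ln N < ratio x")
    case True
    have "0 \<le> 4 / s * ln N" using s N by simp
    then have "0 < ratio x" using True by linarith
    then show ?thesis
      using True K p_nonneg[of x] q_eq_ratio_mult[of x]
      by (simp add: tail_remainder_def f_def ennreal_plus ennreal_mult distrib_left distrib_right mult_ac)
  qed (simp add: tail_remainder_def f_def)
  have "integral\<^sup>N lborel (tail_remainder (4 / s * ln N) K)
      = ennreal (2 + K) * (\<integral>\<^sup>+ \<omega>. f (Xs \<omega>) \<partial>M) + 2 * (\<integral>\<^sup>+ x. (\<Sum>k. level_majorant k x) * f x \<partial>lborel)"
    unfolding rem by (simp add: nn_integral_add nn_integral_cmult nn_integral_p_eq_expectation)
  also have "\<dots> \<le> ennreal (2 + K) * (ennreal a * ennreal \<alpha> + ennreal b)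
      + 2 * (ennreal a * ennreal \<alpha> + ennreal b * ennreal \<beta>)"
  proof (intro add_mono mult_left_mono order_refl zero_le)
    show "(\<integral>\<^sup>+ \<omega>. f (Xs \<omega>) \<partial>M) \<le> ennreal a * ennreal \<alpha> + ennreal b"
      using nn_integral_tail_ratio_le[OF s N, of "\<lambda>_. 1"] \<alpha>
      by (simp add: f_def a_def b_def emeasure_space_1)
    have "(\<integral>\<^sup>+ x. (\<Sum>k. level_majorant k x) * f x \<partial>lborel)
        \<le> (\<integral>\<^sup>+ \<omega>. ennreal ((norm (Ys \<omega>))\<^sup>2) * f (Xs \<omega>) \<partial>M)"
      by (rule nn_integral_level_majorants_le) measurable
    also have "\<dots> \<le> ennreal a * ennreal \<alpha> + ennreal b * ennreal \<beta>"
      using nn_integral_tail_ratio_le[OF s N, of "\<lambda>\<omega>. (norm (Ys \<omega>))\<^sup>2"] \<alpha> \<beta>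
      by (simp add: f_def a_def b_def flip: power_mult)
    finally show "(\<integral>\<^sup>+ x. (\<Sum>k. level_majorant k x) * f x \<partial>lborel) \<le> ennreal a * ennreal \<alpha> + ennreal b * ennreal \<beta>" .
  qed
  also have "\<dots> = ennreal ((2 + K) * (a * \<alpha> + b) + 2 * (a * \<alpha> + b * \<beta>))"
    using K \<open>0 \<le> a\<close> \<open>0 \<le> b\<close> \<open>0 \<le> \<alpha>\<close> \<open>0 \<le> \<beta>\<close> by (simp add: ennreal_plus ennreal_mult)
  also have "(2 + K) * (a * \<alpha> + b) + 2 * (a * \<alpha> + b * \<beta>)
      = ((2 + K) * ((4 / s)\<^sup>2 * \<alpha> + 1) + 2 * ((4 / s)\<^sup>2 * \<alpha> + \<beta>)) / (2 * N)"
    unfolding a_def b_def using s N by (simp add: field_simps)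
  finally show ?thesis .
qed

lemma tail_remainder_measurable [measurable]: "tail_remainder t K \<in> borel_measurable borel"
  unfolding tail_remainder_def by measurable

lemma W2_risk_le_tail_remainder:
  assumes T: "prob_space T" and "0 \<le> t"
    and bounds: "\<forall>\<omega> x y t. \<forall>i\<in>Basis. dl \<le> vhat \<omega> x y t \<bullet> i \<and> vhat \<omega> x y t \<bullet> i \<le> du"
    and wp: "\<forall>\<omega> x. well_posed (vhat \<omega> x)"
  shows "W2_risk q rho0 T vhat \<le> ennreal t * W2_risk p rho0 T vhat
    + integral\<^sup>N lborel (tail_remainder t (4 * gauss_moment + 4 * (real DIM('y) * max (du\<^sup>2) (dl\<^sup>2))))"
proof -
  define K where "K = 4 * gauss_moment + 4 * (real DIM('y) * max (du\<^sup>2) (dl\<^sup>2))"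
  have "0 \<le> gauss_moment" by (simp add: gauss_moment_def)
  then have "0 \<le> K" by (simp add: K_def le_max_iff_disj)
  have "ennreal (q x) * W2sq (cond_law x) (flow_law (vhat \<omega> x))
      \<le> ennreal t * (ennreal (p x) * W2sq (cond_law x) (flow_law (vhat \<omega> x))) + tail_remainder t K x"
    for \<omega> x
    using \<open>0 \<le> t\<close> \<open>0 \<le> K\<close> unfolding K_def
    by (intro q_mult_le_tail_split W2sq_cond_law_le) (use bounds wp in auto)
  then show ?thesis
    unfolding W2_risk_def K_def[symmetric] by (intro nn_integral_nn_integral_affine_le[OF T]) auto
qed

lemma W2_risk_transfer_bound:
  assumes s: "0 < s"
    and exp_moment: "(\<integral>\<^sup>+ \<omega>. ennreal (exp (s * \<bar>ratio (Xs \<omega>)\<bar>)) \<partial>M) < \<infinity>"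
    and fourth_moment: "(\<integral>\<^sup>+ \<omega>. ennreal (norm (Ys \<omega>) ^ 4) \<partial>M) < \<infinity>"
  shows "\<exists>c1 c2 :: real. \<forall>(T :: 'w measure) (vhat :: 'w \<Rightarrow> 'x \<Rightarrow> 'y \<Rightarrow> real \<Rightarrow> 'y)
            (dl :: real) (du :: real) (N :: nat).
      prob_space T \<and> 2 \<le> N \<and>
      (\<forall>\<omega> x y t. \<forall>i\<in>Basis. dl \<le> vhat \<omega> x y t \<bullet> i \<and> vhat \<omega> x y t \<bullet> i \<le> du) \<and>
      (\<forall>\<omega> x. well_posed (vhat \<omega> x)) \<longrightarrow>
      W2_risk q rho0 T vhat
        \<le> ennreal c1 * W2_risk p rho0 T vhat * ennreal (ln (real N))
          + ennreal (c2 * real DIM('y) * (max (du\<^sup>2) (dl\<^sup>2) + 1) / real N)"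
proof -
  define \<alpha> where "\<alpha> = enn2real (\<integral>\<^sup>+ \<omega>. ennreal (exp (s * \<bar>ratio (Xs \<omega>)\<bar>)) \<partial>M)"
  define \<beta> where "\<beta> = enn2real (\<integral>\<^sup>+ \<omega>. ennreal (norm (Ys \<omega>) ^ 4) \<partial>M)"
  have \<alpha>: "(\<integral>\<^sup>+ \<omega>. ennreal (exp (s * \<bar>ratio (Xs \<omega>)\<bar>)) \<partial>M) = ennreal \<alpha>" "0 \<le> \<alpha>"
    using exp_moment by (simp_all add: \<alpha>_def ennreal_enn2real less_top[symmetric])
  have \<beta>: "(\<integral>\<^sup>+ \<omega>. ennreal (norm (Ys \<omega>) ^ 4) \<partial>M) = ennreal \<beta>" "0 \<le> \<beta>"
    using fourth_moment by (simp_all add: \<beta>_def ennreal_enn2real less_top[symmetric])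
  define A where "A = (4 / s)\<^sup>2 * \<alpha> + 1"
  define B where "B = (4 / s)\<^sup>2 * \<alpha> + \<beta>"
  have "0 \<le> A" "0 \<le> B" using \<alpha>(2) \<beta>(2) by (simp_all add: A_def B_def)
  show ?thesis
  proof (rule exI[of _ "4 / s"], rule exI[of _ "((6 + 4 * gauss_moment) * A + 2 * B) / 2"],
      intro allI impI, elim conjE)
    fix T :: "'w measure" and vhat :: "'w \<Rightarrow> 'x \<Rightarrow> 'y \<Rightarrow> real \<Rightarrow> 'y" and dl du :: real and N :: nat
    assume T: "prob_space T" and N: "2 \<le> N"
      and bounds: "\<forall>\<omega> x y t. \<forall>i\<in>Basis. dl \<le> vhat \<omega> x y t \<bullet> i \<and> vhat \<omega> x y t \<bullet> i \<le> du"
      and wp: "\<forall>\<omega> x. well_posed (vhat \<omega> x)"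
    define t where "t = 4 / s * ln (real N)"
    define K where "K = 4 * gauss_moment + 4 * (real DIM('y) * max (du\<^sup>2) (dl\<^sup>2))"
    have "0 \<le> t" using s N by (simp add: t_def)
    have "0 \<le> gauss_moment" by (simp add: gauss_moment_def)
    then have "0 \<le> K" by (simp add: K_def le_max_iff_disj)
    have "W2_risk q rho0 T vhat \<le> ennreal t * W2_risk p rho0 T vhat + integral\<^sup>N lborel (tail_remainder t K)"
      unfolding K_def using T \<open>0 \<le> t\<close> bounds wp by (rule W2_risk_le_tail_remainder)
    also have "integral\<^sup>N lborel (tail_remainder t K) \<le> ennreal (((2 + K) * A + 2 * B) / (2 * real N))"
      unfolding t_def A_def B_def
      using nn_integral_tail_remainder_le[OF s _ \<open>0 \<le> K\<close> \<alpha>(1) \<beta>(1) \<alpha>(2) \<beta>(2)] N by simp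
    also have "\<dots> \<le> ennreal (((6 + 4 * gauss_moment) * A + 2 * B) / 2 * real DIM('y) * (max (du\<^sup>2) (dl\<^sup>2) + 1) / real N)"
      unfolding K_def using \<open>0 \<le> A\<close> \<open>0 \<le> B\<close> \<open>0 \<le> gauss_moment\<close> N
      by (intro ennreal_leI remainder_constant_le) (auto simp: le_max_iff_disj DIM_positive Suc_le_eq)
    also have "ennreal t = ennreal (4 / s) * ennreal (ln (real N))"
      unfolding t_def using s N by (intro ennreal_mult) auto
    finally show "W2_risk q rho0 T vhat \<le> ennreal (4 / s) * W2_risk p rho0 T vhat * ennreal (ln (real N))
        + ennreal (((6 + 4 * gauss_moment) * A + 2 * B) / 2 * real DIM('y) * (max (du\<^sup>2) (dl\<^sup>2) + 1) / real N)"
      by (simp add: mult_ac add_mono)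
  qed
qed

end

theorem lemma5p2:
  fixes M :: "'m measure"
    and Xs :: "'m \<Rightarrow> 'x::euclidean_space"
    and Ys :: "'m \<Rightarrow> 'y::euclidean_space"
    and eta :: "'m \<Rightarrow> 'y"
    and p q :: "'x \<Rightarrow> real"
    and rho0 :: "'x \<Rightarrow> 'y \<Rightarrow> real"
    and a b a' b' :: "real \<Rightarrow> real"
    and v0 :: "'x \<Rightarrow> 'y \<Rightarrow> real \<Rightarrow> 'y"
  assumes M: "prob_space M"
    and Xs_rv: "Xs \<in> M \<rightarrow>\<^sub>M borel" and Ys_rv: "Ys \<in> M \<rightarrow>\<^sub>M borel"
    and eta_rv: "eta \<in> M \<rightarrow>\<^sub>M borel"
    and p_nonneg: "\<And>x. 0 \<le> p x" and p_meas: "p \<in> borel_measurable borel"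
    and Xs_density: "distr M lborel Xs = density lborel (\<lambda>x. ennreal (p x))"
    and rho0_nonneg: "\<And>x y. 0 \<le> rho0 x y"
    and rho0_cond: "\<And>A B. A \<in> sets borel \<Longrightarrow> B \<in> sets borel \<Longrightarrow>
        emeasure M {\<omega> \<in> space M. Xs \<omega> \<in> A \<and> Ys \<omega> \<in> B}
        = (\<integral>\<^sup>+ x\<in>A. ennreal (p x) * (\<integral>\<^sup>+ y\<in>B. ennreal (rho0 x y) \<partial>lborel) \<partial>lborel)"
    and q_nonneg: "\<And>x. 0 \<le> q x" and q_meas: "q \<in> borel_measurable borel"
    and q_prob: "(\<integral>\<^sup>+ x. ennreal (q x) \<partial>lborel) = 1"
    and supp: "{x. 0 < q x} \<subseteq> {x. 0 < p x}"
    and eta_gauss: "distr M lborel eta = std_gauss"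
    and eta_indep: "prob_space.indep_set M (sets (vimage_algebra (space M) eta borel))
        (sets (vimage_algebra (space M) (\<lambda>\<omega>. (Xs \<omega>, Ys \<omega>)) borel))"
    and a_deriv: "\<And>t. t \<in> {0..1} \<Longrightarrow> (a has_real_derivative a' t) (at t within {0..1})"
    and b_deriv: "\<And>t. t \<in> {0..1} \<Longrightarrow> (b has_real_derivative b' t) (at t within {0..1})"
    and a'_cont: "continuous_on {0..1} a'" and b'_cont: "continuous_on {0..1} b'"
    and ab_ends: "a 0 = 1" "b 1 = 1" "a 1 = 0" "b 0 = 0"
    and v0_def: "\<And>t i. t \<in> {0..1} \<Longrightarrow> i \<in> Basis \<Longrightarrow>
        AE \<omega> in M. v0 (Xs \<omega>) (a t *\<^sub>R eta \<omega> + b t *\<^sub>R Ys \<omega>) t \<bullet> i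
          = real_cond_exp M
              (vimage_algebra (space M) (\<lambda>\<omega>. (Xs \<omega>, a t *\<^sub>R eta \<omega> + b t *\<^sub>R Ys \<omega>)) borel)
              (\<lambda>\<omega>. (a' t *\<^sub>R eta \<omega> + b' t *\<^sub>R Ys \<omega>) \<bullet> i) \<omega>"
    and hyp_i: "\<And>x. 0 < p x \<Longrightarrow> well_posed (v0 x) \<and>
        flow_law (v0 x) = density lborel (\<lambda>y. ennreal (rho0 x y))"
    and hyp_ii: "(\<integral>\<^sup>+ \<omega>. ennreal (norm (Ys \<omega>) ^ 4) \<partial>M) < \<infinity>"
    and hyp_iii: "\<exists>s>0. (\<integral>\<^sup>+ \<omega>. ennreal (exp (s * \<bar>q (Xs \<omega>) / p (Xs \<omega>)\<bar>)) \<partial>M) < \<infinity>"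
  shows "\<exists>c1 c2 :: real. \<forall>(T :: 'w measure) (vhat :: 'w \<Rightarrow> 'x \<Rightarrow> 'y \<Rightarrow> real \<Rightarrow> 'y)
            (dl :: real) (du :: real) (N :: nat).
      prob_space T \<and> 2 \<le> N \<and>
      (\<forall>\<omega> x y t. \<forall>i\<in>Basis. dl \<le> vhat \<omega> x y t \<bullet> i \<and> vhat \<omega> x y t \<bullet> i \<le> du) \<and>
      (\<forall>\<omega> x. well_posed (vhat \<omega> x)) \<longrightarrow>
      W2_risk q rho0 T vhat
        \<le> ennreal c1 * W2_risk p rho0 T vhat * ennreal (ln (real N))
          + ennreal (c2 * real DIM('y) * (max (du\<^sup>2) (dl\<^sup>2) + 1) / real N)"
proof -
  \<comment> \<open>The interpolation defining \<open>v0\<close> enters only through hypothesis (i).\<close>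
  interpret prob_space M by (rule M)
  have gauss: "prob_space (std_gauss :: 'y measure)"
    using prob_space_distr[of eta lborel] eta_rv by (simp add: eta_gauss)
  have cond_prob: "prob_space (density lborel (\<lambda>y. ennreal (rho0 x y)))" if "0 < p x" for x
    using hyp_i[OF that] prob_space_flow_law[OF gauss] by metis
  interpret covariate_shift M Xs Ys p rho0 q v0
    by (intro covariate_shift.intro conditional_density.intro conditional_density_axioms.intro
        covariate_shift_axioms.intro)
      (fact M Xs_rv Ys_rv p_nonneg p_meas Xs_density rho0_cond cond_prob q_nonneg q_meas supp gauss hyp_i)+
  obtain s where "0 < s" "(\<integral>\<^sup>+ \<omega>. ennreal (exp (s * \<bar>ratio (Xs \<omega>)\<bar>)) \<partial>M) < \<infinity>"
    using hyp_iii unfolding ratio_def by blast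
  then show ?thesis using hyp_ii by (rule W2_risk_transfer_bound)
qed

end
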